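(* Let $(w_{n,k})_{n,k\ge0}$ be an array of complex numbers such that, for some constants $L,M$: (i) $w_{n,k}=0$ for $k>n$; (ii) $\lim_{n\to\infty} w_{n,k}=1$ for every $k\ge0$; (iii) $|w_{n,k}|\le M$ for all $n,k\ge0$; (iv) $|w_{n,k}-w_{n,k+1}|\le L/n$ for all $n,k\ge0$ (with $n\ge1$). Given $f\in\mathrm{Hol}(\mathbb D)$, $f(z)=\sum_{k=0}^\infty a_kz^k$, set $p_n(z):=\sum_{k=0}^n w_{n,k}a_kz^k$. Then for every positive finite Borel measure $\mu$ on $\overline{\mathbb D}$ such that $f\in\mathcal D_\mu$, we have $\|f-p_n\|_{\mathcal D_\mu}\to0$ as $n\to\infty$.
   Context: $\mathbb D$ is the open unit disk, $\mathrm{Hol}(\mathbb D)$ the holomorphic functions on $\mathbb D$, and $H^2$ the Hardy space with $\|\sum b_kz^k\|_{H^2}^2=\sum|b_k|^2$. For $\zeta\in\overline{\mathbb D}$, $\mathcal D_\zeta$ is the set of $f\in\mathrm{Hol}(\mathbb D)$ of the form $f(z)=a+(z-\zeta)g(z)$ with $g\in H^2$, $a\in\mathbb C$; for such $f$ set $\mathcal D_\zeta(f):=\|g\|_{H^2}^2$, and set $\mathcal D_\zeta(f):=\infty$ if $f\notin\mathcal D_\zeta$. For a positive finite Borel measure $\mu$ on $\overline{\mathbb D}$, $\mathcal D_\mu(f):=\int_{\overline{\mathbb D}}\mathcal D_\zeta(f)\,d\mu(\zeta)$, $\mathcal D_\mu$ is the set of $f\in\mathrm{Hol}(\mathbb D)$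 with $\mathcal D_\mu(f)<\infty$, normed by $\|f\|_{\mathcal D_\mu}^2:=|f(0)|^2+\mathcal D_\mu(f)$. *)

theory Defs
  imports "HOL-Analysis.Analysis"
begin

definition taylor_coeff :: "(complex \<Rightarrow> complex) \<Rightarrow> nat \<Rightarrow> complex" where
  "taylor_coeff f k = (deriv ^^ k) f 0 / of_nat (fact k)"

definition in_H2 :: "(complex \<Rightarrow> complex) \<Rightarrow> bool" where
  "in_H2 g \<longleftrightarrow> g holomorphic_on ball 0 1 \<and> summable (\<lambda>k. (norm (taylor_coeff g k))\<^sup>2)"

definition H2_normsq :: "(complex \<Rightarrow> complex) \<Rightarrow> real" where
  "H2_normsq g = (\<Sum>k. (norm (taylor_coeff g k))\<^sup>2)"

text \<open>Local Dirichlet integral D_zeta(f): \|g\|^2 where f(z) = a + (z - zeta) g(z) on the disk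
  with g in H^2 (g is uniquely determined); infinity (Inf of the empty set) if no such representation.\<close>
definition local_dirichlet :: "complex \<Rightarrow> (complex \<Rightarrow> complex) \<Rightarrow> ennreal" where
  "local_dirichlet \<zeta> f =
     (INF g \<in> {g. in_H2 g \<and> (\<exists>a. \<forall>z\<in>ball 0 1. f z = a + (z - \<zeta>) * g z)}. ennreal (H2_normsq g))"

definition dirichlet_mu :: "complex measure \<Rightarrow> (complex \<Rightarrow> complex) \<Rightarrow> ennreal" where
  "dirichlet_mu \<mu> f = (\<integral>\<^sup>+ \<zeta>. local_dirichlet \<zeta> f \<partial>\<mu>)"

definition Dmu_normsq :: "complex measure \<Rightarrow> (complex \<Rightarrow> complex) \<Rightarrow> ennreal" where
  "Dmu_normsq \<mu> f = ennreal ((norm (f 0))\<^sup>2) + dirichlet_mu \<mu> f"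

end

theory Submission
  imports Defs "HOL-Complex_Analysis.Complex_Analysis"
begin

text \<open>Fix \<open>\<zeta>\<close> with \<open>f = a + (z - \<zeta>) g\<close>, \<open>g \<in> H\<^sup>2\<close>. Summation by parts writes
  \<open>f - p\<^sub>n = a' + (z - \<zeta>) h\<^sub>n\<close> with explicit Taylor coefficients of \<open>h\<^sub>n\<close>.
  Condition (iv) and Cauchy--Schwarz give \<open>\<parallel>h\<^sub>n\<parallel>\<^sup>2 \<le> C \<parallel>g\<parallel>\<^sup>2\<close> uniformly in \<open>n \<ge> 1\<close>,
  and condition (ii) gives \<open>h\<^sub>n \<rightarrow> 0\<close>, first for polynomial \<open>g\<close> and then for all \<open>g\<close> by density.
  Hence \<open>D\<^sub>\<zeta>(f - p\<^sub>n) \<le> C D\<^sub>\<zeta>(f)\<close>, and \<open>D\<^sub>\<zeta>(f - p\<^sub>n) \<rightarrow> 0\<close> wherever \<open>D\<^sub>\<zeta>(f) < \<infinity>\<close>;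
  dominated convergence in \<open>\<zeta>\<close> finishes the proof.\<close>

section \<open>Dominated convergence for functions not known to be measurable\<close>

lemma nn_integral_cmult_le:
  fixes G :: "'a \<Rightarrow> ennreal" and c :: ennreal
  assumes c: "0 < c" "c < \<infinity>"
  shows "(\<integral>\<^sup>+x. c * G x \<partial>M) \<le> c * integral\<^sup>N M G"
  unfolding nn_integral_def[of M "\<lambda>x. c * G x"]
proof (rule SUP_least)
  fix s assume "s \<in> {g. simple_function M g \<and> g \<le> (\<lambda>x. c * G x)}"
  then have s: "simple_function M s" "\<And>x. s x \<le> c * G x" by (auto simp: le_fun_def)
  define s' where "s' = (\<lambda>x. s x / c)"
  have s'_simple: "simple_function M s'"
    unfolding s'_def using simple_function_compose[OF s(1), of "\<lambda>y. y / c"] by (simp add: o_def)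
  have "s' x \<le> G x" for x
    using s(2)[of x] c unfolding s'_def
    by (metis divide_le_posI_ennreal mult.commute not_less_zero order.strict_implies_not_eq)
  then have "integral\<^sup>N M s' \<le> integral\<^sup>N M G" by (intro nn_integral_mono) auto
  moreover have "s x = c * s' x" for x
    unfolding s'_def using c ennreal_mult_divide_eq[of c "s x"] by (simp add: ennreal_times_divide mult.commute)
  then have "s = (\<lambda>x. c * s' x)" by auto
  then have "integral\<^sup>S M s = c * integral\<^sup>S M s'"
    using s'_simple simple_integral_mult by auto
  ultimately show "integral\<^sup>S M s \<le> c * integral\<^sup>N M G"
    using s'_simple by (simp add: nn_integral_eq_simple_integral mult_left_mono)
qed

lemma nn_integral_simple_minorants:
  assumes "\<And>n. integral\<^sup>N M (F n) \<noteq> \<infinity>"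
  obtains s where "\<And>n. simple_function M (s n)" and "\<And>n. s n \<le> F n"
    and "\<And>n. integral\<^sup>N M (F n) < integral\<^sup>S M (s n) + ennreal (1 / Suc n)"
proof -
  have "\<exists>s. simple_function M s \<and> s \<le> F n \<and> integral\<^sup>N M (F n) < integral\<^sup>S M s + ennreal (1 / Suc n)"
    for n
  proof -
    have "{s. simple_function M s \<and> s \<le> F n} \<noteq> {}"
      by (auto intro!: exI[of _ "\<lambda>_. 0"] simp: le_fun_def)
    from SUP_approx_ennreal[of "1 / Suc n", OF _ this nn_integral_def assms] show ?thesis
      by auto
  qed
  then have "\<exists>s. \<forall>n. simple_function M (s n) \<and> s n \<le> F n \<and>
      integral\<^sup>N M (F n) < integral\<^sup>S M (s n) + ennreal (1 / Suc n)"
    by metis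
  with that show ?thesis
    by blast
qed

lemma nn_integral_SUP_tail_tendsto_zero:
  fixes s :: "nat \<Rightarrow> 'a \<Rightarrow> ennreal" and G :: "'a \<Rightarrow> ennreal"
  assumes s_meas: "\<And>n. s n \<in> borel_measurable M"
    and G: "integral\<^sup>N M G < \<infinity>"
    and dom: "\<And>n x. x \<in> space M \<Longrightarrow> s n x \<le> G x"
    and lim: "\<And>x. x \<in> space M \<Longrightarrow> G x < \<infinity> \<Longrightarrow> limsup (\<lambda>n. s n x) = 0"
  shows "(\<lambda>n. \<integral>\<^sup>+x. (SUP m\<in>{n..}. s m x) \<partial>M) \<longlonglongrightarrow> 0"
proof -
  define t where "t n x = (SUP m\<in>{n..}. s m x)" for n x
  have t_meas[measurable]: "t n \<in> borel_measurable M" for n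
    unfolding t_def using s_meas by measurable
  have t_dec: "decseq t"
    unfolding t_def by (intro decseq_SucI le_funI SUP_subset_mono) auto
  have t_fin: "integral\<^sup>N M (t n) < \<infinity>" for n
  proof -
    have "integral\<^sup>N M (t n) \<le> integral\<^sup>N M G"
      unfolding t_def using dom by (intro nn_integral_mono SUP_least) auto
    then show ?thesis using G by auto
  qed
  text \<open>\<open>INF n. t n\<close> vanishes wherever \<open>G\<close> is finite, so even \<open>\<infinity>\<close> times it is below \<open>G\<close>.\<close>
  have "\<infinity> * (INF n. t n x) \<le> G x" if "x \<in> space M" for x
    using lim[OF that] by (cases "G x = \<infinity>") (auto simp: t_def limsup_INF_SUP top.not_eq_extremum)
  then have "\<infinity> * (\<integral>\<^sup>+x. (INF n. t n x) \<partial>M) \<le> integral\<^sup>N M G"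
    by (subst nn_integral_cmult[symmetric]) (auto intro: nn_integral_mono)
  then have "(\<integral>\<^sup>+x. (INF n. t n x) \<partial>M) = 0"
    using G by (auto simp: ennreal_top_mult top_unique split: if_splits)
  then have "(INF n. integral\<^sup>N M (t n)) = 0"
    using nn_integral_monotone_convergence_INF_decseq[OF t_dec t_meas t_fin] by simp
  moreover have "decseq (\<lambda>n. integral\<^sup>N M (t n))"
    using t_dec by (intro decseq_SucI nn_integral_mono) (simp add: decseq_SucD le_funD)
  ultimately show ?thesis
    unfolding t_def[symmetric] using LIMSEQ_INF by metis
qed

text \<open>Compare with the limsup of near-optimal simple minorants, to which monotone convergence applies.\<close>
lemma nn_integral_dominated_tendsto_zero:
  fixes F :: "nat \<Rightarrow> 'a \<Rightarrow> ennreal" and G :: "'a \<Rightarrow> ennreal"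
  assumes G: "integral\<^sup>N M G < \<infinity>"
    and dom: "\<And>n x. x \<in> space M \<Longrightarrow> F n x \<le> G x"
    and lim: "\<And>x. x \<in> space M \<Longrightarrow> G x < \<infinity> \<Longrightarrow> (\<lambda>n. F n x) \<longlonglongrightarrow> 0"
  shows "(\<lambda>n. integral\<^sup>N M (F n)) \<longlonglongrightarrow> 0"
proof -
  have "integral\<^sup>N M (F n) \<noteq> \<infinity>" for n
    using nn_integral_mono[of M "F n" G] dom G by (auto simp: top_unique)
  then obtain s where s_simple: "\<And>n. simple_function M (s n)" and s_le: "\<And>n. s n \<le> F n"
    and s_approx: "\<And>n. integral\<^sup>N M (F n) < integral\<^sup>S M (s n) + ennreal (1 / Suc n)"
    using nn_integral_simple_minorants[where F = F] by blast
  have "(\<lambda>n. \<integral>\<^sup>+x. (SUP m\<in>{n..}. s m x) \<partial>M) \<longlonglongrightarrow> 0"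
  proof (rule nn_integral_SUP_tail_tendsto_zero[OF _ G])
    show "s n \<in> borel_measurable M" for n
      using s_simple by (rule borel_measurable_simple_function)
    show "s n x \<le> G x" if "x \<in> space M" for n x
      using s_le dom[OF that] by (meson le_fun_def order_trans)
    show "limsup (\<lambda>n. s n x) = 0" if "x \<in> space M" "G x < \<infinity>" for x
    proof -
      have "limsup (\<lambda>n. s n x) \<le> limsup (\<lambda>n. F n x)"
        using s_le by (intro Limsup_mono always_eventually) (auto simp: le_fun_def)
      also have "\<dots> = 0"
        using lim[OF that] by (intro lim_imp_Limsup) auto
      finally show ?thesis by simp
    qed
  qed
  moreover have "(\<lambda>n. ennreal (1 / Suc n)) \<longlonglongrightarrow> 0"
    using LIMSEQ_Suc[OF tendsto_ennrealI[OF lim_const_over_n[of 1]]] by simp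
  ultimately have "(\<lambda>n. (\<integral>\<^sup>+x. (SUP m\<in>{n..}. s m x) \<partial>M) + ennreal (1 / Suc n)) \<longlonglongrightarrow> 0 + 0"
    by (rule tendsto_add)
  then have upper: "(\<lambda>n. (\<integral>\<^sup>+x. (SUP m\<in>{n..}. s m x) \<partial>M) + ennreal (1 / Suc n)) \<longlonglongrightarrow> 0"
    by simp
  have "integral\<^sup>N M (F n) \<le> (\<integral>\<^sup>+x. (SUP m\<in>{n..}. s m x) \<partial>M) + ennreal (1 / Suc n)" for n
  proof -
    have "integral\<^sup>S M (s n) \<le> (\<integral>\<^sup>+x. (SUP m\<in>{n..}. s m x) \<partial>M)"
      using s_simple by (auto simp: nn_integral_eq_simple_integral[symmetric]
          intro!: nn_integral_mono SUP_upper)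
    then show ?thesis
      using s_approx[of n] by (meson add_right_mono less_imp_le order_trans)
  qed
  then show ?thesis
    by (intro tendsto_sandwich[OF always_eventually always_eventually tendsto_const upper]) auto
qed

section \<open>The error function of the weighted partial sums\<close>

lemma taylor_coeff_eq_fps_nth: "f has_fps_expansion F \<Longrightarrow> taylor_coeff f k = fps_nth F k"
  unfolding taylor_coeff_def by (simp add: fps_nth_fps_expansion)

lemma taylor_coeff_Suc_of_linear_factor:
  assumes g: "g holomorphic_on ball 0 1" and rep: "\<forall>z\<in>ball 0 1. f z = a + (z - \<zeta>) * g z"
  shows "taylor_coeff f (Suc k) = taylor_coeff g k - \<zeta> * taylor_coeff g (Suc k)"
proof -
  define G where "G = fps_expansion g 0"
  have gG: "g has_fps_expansion G"
    unfolding G_def using g by (intro has_fps_expansion_fps_expansion) auto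
  have fg: "eventually (\<lambda>z. a + (z - \<zeta>) * g z = f z) (nhds 0)"
  proof -
    have "eventually (\<lambda>z. z \<in> ball 0 1) (nhds (0::complex))"
      by (intro eventually_nhds_in_open) auto
    then show ?thesis by eventually_elim (use rep in auto)
  qed
  have "(\<lambda>z. a + (z - \<zeta>) * g z) has_fps_expansion fps_const a + (fps_X - fps_const \<zeta>) * G"
    by (intro fps_expansion_intros gG)
  then have fF: "f has_fps_expansion fps_const a + (fps_X - fps_const \<zeta>) * G"
    using has_fps_expansion_cong[OF fg refl] by simp
  show ?thesis
    unfolding taylor_coeff_eq_fps_nth[OF fF] taylor_coeff_eq_fps_nth[OF gG] by (simp add: algebra_simps)
qed

lemma taylor_coeff_diff_polynomial:
  assumes g: "g holomorphic_on ball 0 1"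
  shows "taylor_coeff (\<lambda>z. g z - (\<Sum>i\<le>n. q i * z ^ i)) k = taylor_coeff g k - (if k \<le> n then q k else 0)"
proof -
  define G where "G = fps_expansion g 0"
  have gG: "g has_fps_expansion G"
    unfolding G_def using g by (intro has_fps_expansion_fps_expansion) auto
  have "(\<lambda>z. g z - (\<Sum>i\<le>n. q i * z ^ i)) has_fps_expansion G - (\<Sum>i\<le>n. fps_const (q i) * fps_X ^ i)"
    by (intro fps_expansion_intros gG)
  moreover have "(\<Sum>i\<le>n. q i * (if k = i then 1 else 0)) = (\<Sum>i\<le>n. if k = i then q i else 0)"
    by (intro sum.cong) auto
  ultimately show ?thesis
    by (auto simp: taylor_coeff_eq_fps_nth[OF gG] taylor_coeff_eq_fps_nth fps_sum_nth)
qed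

lemma sum_powers_eq_linear_factor:
  fixes q c :: "nat \<Rightarrow> 'a::comm_ring_1"
  assumes rec: "\<And>i. i \<le> n \<Longrightarrow> q i - \<zeta> * q (Suc i) = c (Suc i)" and qz: "q (Suc n) = 0"
  shows "(\<Sum>j\<le>Suc n. c j * z ^ j) = (c 0 + \<zeta> * q 0) + (z - \<zeta>) * (\<Sum>i\<le>n. q i * z ^ i)"
proof -
  have shift: "(\<Sum>j\<le>n. \<zeta> * q j * z ^ j) = \<zeta> * q 0 + (\<Sum>i\<le>n. \<zeta> * q (Suc i) * z ^ Suc i)"
    using qz sum.atMost_Suc_shift[of "\<lambda>j. \<zeta> * q j * z ^ j" n] by simp
  have "(\<Sum>j\<le>Suc n. c j * z ^ j) = c 0 + (\<Sum>i\<le>n. c (Suc i) * z ^ Suc i)"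
    by (subst sum.atMost_Suc_shift) simp
  also have "\<dots> = c 0 + ((\<Sum>i\<le>n. q i * z ^ Suc i) - (\<Sum>i\<le>n. \<zeta> * q (Suc i) * z ^ Suc i))"
    by (simp add: sum_subtractf[symmetric] rec[symmetric] algebra_simps)
  also have "\<dots> = c 0 + \<zeta> * q 0 + ((\<Sum>i\<le>n. q i * z ^ Suc i) - (\<Sum>j\<le>n. \<zeta> * q j * z ^ j))"
    unfolding shift by (simp add: algebra_simps)
  also have "(\<Sum>i\<le>n. q i * z ^ Suc i) - (\<Sum>j\<le>n. \<zeta> * q j * z ^ j) = (z - \<zeta>) * (\<Sum>i\<le>n. q i * z ^ i)"
    by (simp add: sum_distrib_left sum_subtractf[symmetric] algebra_simps)
  finally show ?thesis .
qed

text \<open>If \<open>f = a + (z - \<zeta>) g\<close> and \<open>b\<close> are the Taylor coefficients of \<open>g\<close>, then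
  \<open>f - p\<^sub>n = a' + (z - \<zeta>) h\<close>, where the Taylor coefficients of \<open>h\<close> are the
  \<open>error_coeff\<close>s; \<open>weight_tail\<close> comes from summation by parts.\<close>
definition weight_tail :: "(nat \<Rightarrow> nat \<Rightarrow> complex) \<Rightarrow> nat \<Rightarrow> complex \<Rightarrow> (nat \<Rightarrow> complex) \<Rightarrow> nat \<Rightarrow> complex"
  where "weight_tail w n \<zeta> b i = (\<Sum>k=i..n. (w n (Suc k) - w n k) * b k * \<zeta> ^ (k - i))"

definition error_coeff :: "(nat \<Rightarrow> nat \<Rightarrow> complex) \<Rightarrow> nat \<Rightarrow> complex \<Rightarrow> (nat \<Rightarrow> complex) \<Rightarrow> nat \<Rightarrow> complex"
  where "error_coeff w n \<zeta> b i = (1 - w n i) * b i - weight_tail w n \<zeta> b i"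

lemma weight_tail_eq_0: "n < i \<Longrightarrow> weight_tail w n \<zeta> b i = 0"
  by (simp add: weight_tail_def)

lemma error_coeff_eq_beyond:
  "(\<And>k. n < k \<Longrightarrow> w n k = 0) \<Longrightarrow> n < i \<Longrightarrow> error_coeff w n \<zeta> b i = b i"
  by (simp add: error_coeff_def weight_tail_eq_0)

lemma error_coeff_add: "error_coeff w n \<zeta> (\<lambda>k. x k + y k) i = error_coeff w n \<zeta> x i + error_coeff w n \<zeta> y i"
  by (simp add: error_coeff_def weight_tail_def sum.distrib[symmetric] algebra_simps)

lemma weight_tail_recurrence:
  assumes "i \<le> n"
  shows "(w n i * b i + weight_tail w n \<zeta> b i) - \<zeta> * (w n (Suc i) * b (Suc i) + weight_tail w n \<zeta> b (Suc i))
           = w n (Suc i) * (b i - \<zeta> * b (Suc i))"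
proof -
  have "weight_tail w n \<zeta> b i = (w n (Suc i) - w n i) * b i
        + (\<Sum>k=Suc i..n. (w n (Suc k) - w n k) * b k * \<zeta> ^ (k - i))"
    unfolding weight_tail_def using assms by (subst sum.atLeast_Suc_atMost) auto
  moreover have "\<zeta> * weight_tail w n \<zeta> b (Suc i) = (\<Sum>k=Suc i..n. (w n (Suc k) - w n k) * b k * \<zeta> ^ (k - i))"
    unfolding weight_tail_def sum_distrib_left
  proof (intro sum.cong refl)
    fix k assume "k \<in> {Suc i..n}"
    then have "k - i = Suc (k - Suc i)" by auto
    then show "\<zeta> * ((w n (Suc k) - w n k) * b k * \<zeta> ^ (k - Suc i)) = (w n (Suc k) - w n k) * b k * \<zeta> ^ (k - i)"
      by (simp add: algebra_simps)
  qed
  ultimately show ?thesis by (simp add: algebra_simps)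
qed

lemma weighted_sum_linear_factor:
  fixes w :: "nat \<Rightarrow> nat \<Rightarrow> complex"
  assumes wz: "\<And>k. n < k \<Longrightarrow> w n k = 0"
    and g: "g holomorphic_on ball 0 1" and rep: "\<forall>z\<in>ball 0 1. f z = a + (z - \<zeta>) * g z"
  defines "q \<equiv> \<lambda>i. w n i * taylor_coeff g i + weight_tail w n \<zeta> (taylor_coeff g) i"
  shows "\<exists>c. \<forall>z. (\<Sum>k\<le>n. w n k * taylor_coeff f k * z ^ k) = c + (z - \<zeta>) * (\<Sum>i\<le>n. q i * z ^ i)"
proof -
  define c where "c j = w n j * taylor_coeff f j" for j
  have "(\<Sum>k\<le>n. w n k * taylor_coeff f k * z ^ k) = (c 0 + \<zeta> * q 0) + (z - \<zeta>) * (\<Sum>i\<le>n. q i * z ^ i)"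
    for z
  proof -
    have "(\<Sum>k\<le>n. w n k * taylor_coeff f k * z ^ k) = (\<Sum>j\<le>Suc n. c j * z ^ j)"
      using wz[of "Suc n"] by (simp add: c_def)
    also have "\<dots> = (c 0 + \<zeta> * q 0) + (z - \<zeta>) * (\<Sum>i\<le>n. q i * z ^ i)"
    proof (rule sum_powers_eq_linear_factor)
      show "q i - \<zeta> * q (Suc i) = c (Suc i)" if "i \<le> n" for i
        unfolding q_def c_def weight_tail_recurrence[OF that]
        by (simp add: taylor_coeff_Suc_of_linear_factor[OF g rep])
      show "q (Suc n) = 0"
        by (simp add: q_def wz weight_tail_eq_0)
    qed
    finally show ?thesis .
  qed
  then show ?thesis by blast
qed

section \<open>Estimates for the error coefficients\<close>

lemma norm_add_squared_le:
  fixes x y :: "'a::real_normed_vector"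
  shows "(norm (x + y))\<^sup>2 \<le> 2 * (norm x)\<^sup>2 + 2 * (norm y)\<^sup>2"
proof -
  have "(norm (x + y))\<^sup>2 \<le> (norm x + norm y)\<^sup>2"
    by (simp add: norm_triangle_ineq power_mono)
  also have "\<dots> \<le> 2 * (norm x)\<^sup>2 + 2 * (norm y)\<^sup>2"
    using zero_le_power2[of "norm x - norm y"] by (simp add: power2_eq_square algebra_simps)
  finally show ?thesis .
qed

lemma norm_diff_squared_le:
  fixes x y :: "'a::real_normed_vector"
  shows "(norm (x - y))\<^sup>2 \<le> 2 * (norm x)\<^sup>2 + 2 * (norm y)\<^sup>2"
  using norm_add_squared_le[of x "- y"] by simp

lemma summable_norm_add_squared:
  fixes x y :: "nat \<Rightarrow> 'a::real_normed_vector"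
  assumes "summable (\<lambda>k. (norm (x k))\<^sup>2)" and "summable (\<lambda>k. (norm (y k))\<^sup>2)"
  shows "summable (\<lambda>k. (norm (x k + y k))\<^sup>2)"
  by (rule summable_comparison_test'[of "\<lambda>k. 2 * (norm (x k))\<^sup>2 + 2 * (norm (y k))\<^sup>2" 0])
    (auto intro!: summable_add summable_mult assms norm_add_squared_le)

lemma norm_weight_tail_le:
  assumes wlip: "\<And>k. norm (w n k - w n (Suc k)) \<le> L / real n" and z: "norm \<zeta> \<le> 1"
  shows "norm (weight_tail w n \<zeta> b i) \<le> L / real n * (\<Sum>k\<le>n. norm (b k))"
proof -
  have "norm (weight_tail w n \<zeta> b i) \<le> (\<Sum>k=i..n. norm ((w n (Suc k) - w n k) * b k * \<zeta> ^ (k - i)))"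
    unfolding weight_tail_def by (rule norm_sum)
  also have "\<dots> \<le> (\<Sum>k=i..n. L / real n * norm (b k))"
  proof (rule sum_mono)
    fix k
    have "norm (\<zeta> ^ (k - i)) \<le> 1"
      using z by (simp add: norm_power power_le_one)
    then have "norm ((w n (Suc k) - w n k) * b k * \<zeta> ^ (k - i)) \<le> norm (w n (Suc k) - w n k) * norm (b k)"
      unfolding norm_mult by (simp add: mult_left_le)
    also have "\<dots> \<le> L / real n * norm (b k)"
      using wlip[of k] by (intro mult_right_mono) (simp_all add: norm_minus_commute)
    finally show "norm ((w n (Suc k) - w n k) * b k * \<zeta> ^ (k - i)) \<le> L / real n * norm (b k)" .
  qed
  also have "\<dots> \<le> (\<Sum>k\<le>n. L / real n * norm (b k))"
    using order_trans[OF norm_ge_zero wlip[of 0]]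
    by (intro sum_mono2) (auto simp del: times_divide_eq_left)
  finally show ?thesis
    by (simp add: sum_distrib_left)
qed

lemma sum_weight_tail_squared_le:
  assumes wlip: "\<And>k. norm (w n k - w n (Suc k)) \<le> L / real n"
    and n: "n \<ge> 1" and z: "norm \<zeta> \<le> 1" and b: "summable (\<lambda>k. (norm (b k))\<^sup>2)"
  shows "(\<Sum>i\<le>n. (norm (weight_tail w n \<zeta> b i))\<^sup>2) \<le> 4 * L\<^sup>2 * (\<Sum>k. (norm (b k))\<^sup>2)"
proof -
  define S where "S = (\<Sum>k. (norm (b k))\<^sup>2)"
  define T where "T = (\<Sum>k\<le>n. norm (b k))"
  have S: "S \<ge> 0"
    unfolding S_def using b by (simp add: suminf_nonneg)
  have TS: "T\<^sup>2 \<le> S * (n + 1)"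
  proof -
    have "T\<^sup>2 \<le> (\<Sum>k\<le>n. (norm (b k))\<^sup>2) * card {..n}"
      unfolding T_def by (rule sum_squared_le_sum_of_squares)
    also have "(\<Sum>k\<le>n. (norm (b k))\<^sup>2) \<le> S"
      unfolding S_def by (rule sum_le_suminf[OF b]) auto
    finally show ?thesis by (simp add: mult_right_mono)
  qed
  note tail_le = norm_weight_tail_le[where w = w and n = n and b = b, OF wlip z, folded T_def]
  have "(\<Sum>i\<le>n. (norm (weight_tail w n \<zeta> b i))\<^sup>2) \<le> (\<Sum>i\<le>n. (L / real n)\<^sup>2 * (S * (n + 1)))"
  proof (rule sum_mono)
    fix i
    have "(norm (weight_tail w n \<zeta> b i))\<^sup>2 \<le> (L / real n)\<^sup>2 * T\<^sup>2"
      using power_mono[OF tail_le[of i] norm_ge_zero, of 2] by (simp add: power_mult_distrib power_divide)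
    also have "\<dots> \<le> (L / real n)\<^sup>2 * (S * (n + 1))"
      using TS by (simp add: mult_left_mono)
    finally show "(norm (weight_tail w n \<zeta> b i))\<^sup>2 \<le> (L / real n)\<^sup>2 * (S * (n + 1))" .
  qed
  also have "\<dots> = ((real n + 1) / real n)\<^sup>2 * L\<^sup>2 * S"
    by (simp add: power2_eq_square power_divide algebra_simps)
  also have "\<dots> \<le> 2\<^sup>2 * L\<^sup>2 * S"
    using n S by (intro mult_right_mono power_mono) (auto simp: field_simps)
  finally show ?thesis
    unfolding S_def by simp
qed

lemma summable_error_coeff:
  assumes "\<And>k. n < k \<Longrightarrow> w n k = 0" and "summable (\<lambda>k. (norm (b k))\<^sup>2)"
  shows "summable (\<lambda>i. (norm (error_coeff w n \<zeta> b i))\<^sup>2)"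
proof -
  have "eventually (\<lambda>i. (norm (error_coeff w n \<zeta> b i))\<^sup>2 = (norm (b i))\<^sup>2) sequentially"
    using eventually_gt_at_top[of n] by eventually_elim (simp add: error_coeff_eq_beyond assms)
  then show ?thesis
    using summable_cong assms(2) by fastforce
qed

lemma suminf_error_coeff_le:
  assumes wz: "\<And>k. n < k \<Longrightarrow> w n k = 0"
    and wb: "\<And>k. norm (w n k) \<le> M"
    and wlip: "\<And>k. norm (w n k - w n (Suc k)) \<le> L / real n"
    and n: "n \<ge> 1" and z: "norm \<zeta> \<le> 1" and b: "summable (\<lambda>k. (norm (b k))\<^sup>2)"
  shows "(\<Sum>i. (norm (error_coeff w n \<zeta> b i))\<^sup>2) \<le> (2 * (1 + M)\<^sup>2 + 8 * L\<^sup>2) * (\<Sum>k. (norm (b k))\<^sup>2)"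
proof -
  define t where "t i = (if i \<le> n then (norm (weight_tail w n \<zeta> b i))\<^sup>2 else 0)" for i
  have t: "t sums (\<Sum>i\<le>n. (norm (weight_tail w n \<zeta> b i))\<^sup>2)"
    using sums_finite[of "{..n}" t] by (simp add: t_def)
  have pointwise: "(norm (error_coeff w n \<zeta> b i))\<^sup>2 \<le> 2 * (1 + M)\<^sup>2 * (norm (b i))\<^sup>2 + 2 * t i" for i
  proof -
    have "norm (1 - w n i) \<le> 1 + M"
      using norm_triangle_ineq4[of 1 "w n i"] wb[of i] by simp
    then have "(norm ((1 - w n i) * b i))\<^sup>2 \<le> (1 + M)\<^sup>2 * (norm (b i))\<^sup>2"
      by (simp add: norm_mult power_mult_distrib mult_right_mono power_mono)
    moreover have "(norm (weight_tail w n \<zeta> b i))\<^sup>2 = t i"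
      by (simp add: t_def weight_tail_eq_0)
    ultimately show ?thesis
      using norm_diff_squared_le[of "(1 - w n i) * b i" "weight_tail w n \<zeta> b i"]
      unfolding error_coeff_def by linarith
  qed
  have "(\<lambda>i. 2 * (1 + M)\<^sup>2 * (norm (b i))\<^sup>2 + 2 * t i)
          sums (2 * (1 + M)\<^sup>2 * (\<Sum>k. (norm (b k))\<^sup>2) + 2 * (\<Sum>i\<le>n. (norm (weight_tail w n \<zeta> b i))\<^sup>2))"
    by (intro sums_add sums_mult summable_sums b t)
  then have "(\<Sum>i. (norm (error_coeff w n \<zeta> b i))\<^sup>2)
      \<le> 2 * (1 + M)\<^sup>2 * (\<Sum>k. (norm (b k))\<^sup>2) + 2 * (\<Sum>i\<le>n. (norm (weight_tail w n \<zeta> b i))\<^sup>2)"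
    using suminf_le[OF pointwise summable_error_coeff[where w = w and n = n, OF wz b]]
    by (simp add: sums_iff)
  also have "\<dots> \<le> 2 * (1 + M)\<^sup>2 * (\<Sum>k. (norm (b k))\<^sup>2) + 2 * (4 * L\<^sup>2 * (\<Sum>k. (norm (b k))\<^sup>2))"
    using sum_weight_tail_squared_le[where w = w and n = n, OF wlip n z b] by simp
  finally show ?thesis
    by (simp add: algebra_simps)
qed

lemma suminf_error_coeff_add_le:
  assumes wz: "\<And>k. n < k \<Longrightarrow> w n k = 0"
    and x: "summable (\<lambda>k. (norm (x k))\<^sup>2)" and y: "summable (\<lambda>k. (norm (y k))\<^sup>2)"
  shows "(\<Sum>i. (norm (error_coeff w n \<zeta> (\<lambda>k. x k + y k) i))\<^sup>2)
           \<le> 2 * (\<Sum>i. (norm (error_coeff w n \<zeta> x i))\<^sup>2) + 2 * (\<Sum>i. (norm (error_coeff w n \<zeta> y i))\<^sup>2)"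
proof -
  note sx = summable_error_coeff[where w = w and n = n and b = x and \<zeta> = \<zeta>, OF wz x]
    and sy = summable_error_coeff[where w = w and n = n and b = y and \<zeta> = \<zeta>, OF wz y]
  have "(\<Sum>i. (norm (error_coeff w n \<zeta> (\<lambda>k. x k + y k) i))\<^sup>2)
      \<le> (\<Sum>i. 2 * (norm (error_coeff w n \<zeta> x i))\<^sup>2 + 2 * (norm (error_coeff w n \<zeta> y i))\<^sup>2)"
  proof (rule suminf_le)
    show "summable (\<lambda>i. (norm (error_coeff w n \<zeta> (\<lambda>k. x k + y k) i))\<^sup>2)"
      using summable_error_coeff[where w = w and n = n and b = "\<lambda>k. x k + y k", OF wz summable_norm_add_squared[OF x y]] .
    show "summable (\<lambda>i. 2 * (norm (error_coeff w n \<zeta> x i))\<^sup>2 + 2 * (norm (error_coeff w n \<zeta> y i))\<^sup>2)"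
      by (intro summable_add summable_mult sx sy)
  qed (simp add: error_coeff_add norm_add_squared_le)
  also have "\<dots> = 2 * (\<Sum>i. (norm (error_coeff w n \<zeta> x i))\<^sup>2) + 2 * (\<Sum>i. (norm (error_coeff w n \<zeta> y i))\<^sup>2)"
    using sx sy by (simp add: suminf_add[symmetric] suminf_mult summable_mult)
  finally show ?thesis .
qed

lemma error_coeff_tendsto_zero:
  assumes wlim: "\<And>k. (\<lambda>n. w n k) \<longlonglongrightarrow> 1" and bK: "\<And>k. K \<le> k \<Longrightarrow> b k = 0"
  shows "(\<lambda>n. error_coeff w n \<zeta> b i) \<longlonglongrightarrow> 0"
proof -
  have "eventually (\<lambda>n. (1 - w n i) * b i - (\<Sum>k=i..<K. (w n (Suc k) - w n k) * b k * \<zeta> ^ (k - i))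
          = error_coeff w n \<zeta> b i) sequentially"
    using eventually_ge_at_top[of K]
  proof eventually_elim
    case (elim n)
    then have "weight_tail w n \<zeta> b i = (\<Sum>k=i..<K. (w n (Suc k) - w n k) * b k * \<zeta> ^ (k - i))"
      unfolding weight_tail_def by (intro sum.mono_neutral_right) (auto simp: bK)
    then show ?case by (simp add: error_coeff_def)
  qed
  moreover have "(\<lambda>n. (1 - w n i) * b i - (\<Sum>k=i..<K. (w n (Suc k) - w n k) * b k * \<zeta> ^ (k - i)))
      \<longlonglongrightarrow> (1 - 1) * b i - (\<Sum>k=i..<K. (1 - 1) * b k * \<zeta> ^ (k - i))"
    by (intro tendsto_intros wlim)
  ultimately show ?thesis
    by (simp add: Lim_transform_eventually)
qed

lemma suminf_error_coeff_tendsto_zero_finite_support: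
  assumes wlim: "\<And>k. (\<lambda>n. w n k) \<longlonglongrightarrow> 1" and bK: "\<And>k. K \<le> k \<Longrightarrow> b k = 0"
  shows "(\<lambda>n. \<Sum>i. (norm (error_coeff w n \<zeta> b i))\<^sup>2) \<longlonglongrightarrow> 0"
proof -
  have "error_coeff w n \<zeta> b i = 0" if "K \<le> i" for n i
    using that by (simp add: error_coeff_def weight_tail_def bK)
  then have "(\<Sum>i. (norm (error_coeff w n \<zeta> b i))\<^sup>2) = (\<Sum>i<K. (norm (error_coeff w n \<zeta> b i))\<^sup>2)" for n
    by (intro suminf_finite) auto
  moreover have "(\<lambda>n. \<Sum>i<K. (norm (error_coeff w n \<zeta> b i))\<^sup>2) \<longlonglongrightarrow> (\<Sum>i<K. (norm (0::complex))\<^sup>2)"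
    by (intro tendsto_intros error_coeff_tendsto_zero[OF wlim bK])
  ultimately show ?thesis by simp
qed

lemma suminf_tail_truncation_less:
  fixes b :: "nat \<Rightarrow> 'a::real_normed_vector"
  assumes b: "summable (\<lambda>k. (norm (b k))\<^sup>2)" and \<delta>: "0 < \<delta>"
  shows "\<exists>K. (\<Sum>k. (norm (if k < K then 0 else b k))\<^sup>2) < \<delta>"
proof -
  obtain K where K: "norm (\<Sum>i. (norm (b (i + K)))\<^sup>2) < \<delta>"
    using suminf_exist_split[OF \<delta> b] by blast
  have "summable (\<lambda>k. (norm (if k < K then 0 else b k))\<^sup>2)"
    by (rule summable_comparison_test'[OF b, of 0]) auto
  from suminf_split_initial_segment[OF this, of K] K show ?thesis
    by (intro exI[of _ K]) auto
qed

text \<open>Density argument: the error functionals are uniformly bounded on \<open>\<ell>\<^sup>2\<close> and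
  tend to zero on finitely supported sequences.\<close>
lemma suminf_error_coeff_tendsto_zero:
  assumes wz: "\<And>n k. n < k \<Longrightarrow> w n k = 0"
    and wb: "\<And>n k. norm (w n k) \<le> M"
    and wlip: "\<And>n k. n \<ge> 1 \<Longrightarrow> norm (w n k - w n (Suc k)) \<le> L / real n"
    and wlim: "\<And>k. (\<lambda>n. w n k) \<longlonglongrightarrow> 1"
    and z: "norm \<zeta> \<le> 1" and b: "summable (\<lambda>k. (norm (b k))\<^sup>2)"
  shows "(\<lambda>n. \<Sum>i. (norm (error_coeff w n \<zeta> b i))\<^sup>2) \<longlonglongrightarrow> 0"
proof (rule LIMSEQ_I)
  fix r :: real assume r: "r > 0"
  define C where "C = 2 * (1 + M)\<^sup>2 + 8 * L\<^sup>2"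
  define \<delta> where "\<delta> = r / (4 * (C + 1))"
  have C: "C \<ge> 0" and \<delta>: "\<delta> > 0"
    using r by (simp_all add: C_def \<delta>_def add_nonneg_pos)
  obtain K where tail: "(\<Sum>k. (norm (if k < K then 0 else b k))\<^sup>2) < \<delta>"
    using suminf_tail_truncation_less[OF b \<delta>] by blast
  define bh where "bh k = (if k < K then b k else 0)" for k
  define bt where "bt k = (if k < K then 0 else b k)" for k
  have bh: "summable (\<lambda>k. (norm (bh k))\<^sup>2)" and bt: "summable (\<lambda>k. (norm (bt k))\<^sup>2)"
    by (auto intro: summable_comparison_test'[OF b, of 0] simp: bh_def bt_def)
  from tail have "C * (\<Sum>k. (norm (bt k))\<^sup>2) \<le> C * \<delta>"
    unfolding bt_def[symmetric] using C by (intro mult_left_mono) auto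
  also have "\<dots> \<le> r / 4"
    unfolding \<delta>_def using r C by (simp add: field_simps)
  finally have bt_small: "(\<Sum>i. (norm (error_coeff w n \<zeta> bt i))\<^sup>2) \<le> r / 4" if "n \<ge> 1" for n
    using suminf_error_coeff_le[where w = w and n = n, OF wz wb wlip[OF that] that z bt]
    unfolding C_def by linarith
  have "(\<lambda>n. \<Sum>i. (norm (error_coeff w n \<zeta> bh i))\<^sup>2) \<longlonglongrightarrow> 0"
    by (rule suminf_error_coeff_tendsto_zero_finite_support[OF wlim, of K]) (simp add: bh_def)
  then have "eventually (\<lambda>n. (\<Sum>i. (norm (error_coeff w n \<zeta> bh i))\<^sup>2) < r / 4) sequentially"
    using r by (intro order_tendstoD(2)) auto
  then obtain N where bh_small: "\<And>n. n \<ge> N \<Longrightarrow> (\<Sum>i. (norm (error_coeff w n \<zeta> bh i))\<^sup>2) < r / 4"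
    by (auto simp: eventually_sequentially)
  have "(\<Sum>i. (norm (error_coeff w n \<zeta> b i))\<^sup>2) < r" if "n \<ge> max N 1" for n
  proof -
    have "b = (\<lambda>k. bh k + bt k)"
      by (auto simp: bh_def bt_def)
    then have "(\<Sum>i. (norm (error_coeff w n \<zeta> b i))\<^sup>2)
        \<le> 2 * (\<Sum>i. (norm (error_coeff w n \<zeta> bh i))\<^sup>2) + 2 * (\<Sum>i. (norm (error_coeff w n \<zeta> bt i))\<^sup>2)"
      using suminf_error_coeff_add_le[where w = w and n = n, OF wz bh bt] by simp
    then show ?thesis
      using bh_small[of n] bt_small[of n] that by linarith
  qed
  moreover have "0 \<le> (\<Sum>i. (norm (error_coeff w n \<zeta> b i))\<^sup>2)" for n
    using summable_error_coeff[where w = w and n = n, OF wz b] by (simp add: suminf_nonneg)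
  ultimately show "\<exists>N. \<forall>n\<ge>N. norm ((\<Sum>i. (norm (error_coeff w n \<zeta> b i))\<^sup>2) - 0) < r"
    by (intro exI[of _ "max N 1"]) auto
qed

section \<open>Local Dirichlet integrals of the error\<close>

lemma le_cmult_INF_ennreal:
  fixes F c :: ennreal
  assumes c: "0 < c" "c < \<infinity>" and le: "\<And>x. x \<in> S \<Longrightarrow> F \<le> c * f x"
  shows "F \<le> c * (INF x\<in>S. f x)"
proof -
  have "F / c \<le> (INF x\<in>S. f x)"
    using le c by (intro INF_greatest divide_le_posI_ennreal) auto
  then have "c * (F / c) \<le> c * (INF x\<in>S. f x)"
    by (rule mult_left_mono) simp
  moreover have "c * (F / c) = F"
    using c ennreal_mult_divide_eq[of c F] by (simp add: ennreal_times_divide mult.commute)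
  ultimately show ?thesis by simp
qed

lemma local_dirichlet_weighted_sum_le:
  fixes w :: "nat \<Rightarrow> nat \<Rightarrow> complex"
  assumes wz: "\<And>k. n < k \<Longrightarrow> w n k = 0"
    and gH: "in_H2 g" and rep: "\<forall>z\<in>ball 0 1. f z = a + (z - \<zeta>) * g z"
  shows "local_dirichlet \<zeta> (\<lambda>z. f z - (\<Sum>k\<le>n. w n k * taylor_coeff f k * z ^ k))
           \<le> ennreal (\<Sum>i. (norm (error_coeff w n \<zeta> (taylor_coeff g) i))\<^sup>2)"
proof -
  define b where "b = taylor_coeff g"
  define q where "q i = w n i * b i + weight_tail w n \<zeta> b i" for i
  define h where "h z = g z - (\<Sum>i\<le>n. q i * z ^ i)" for z
  have g: "g holomorphic_on ball 0 1" and b: "summable (\<lambda>k. (norm (b k))\<^sup>2)"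
    using gH unfolding in_H2_def b_def by auto
  obtain c where c: "\<And>z. (\<Sum>k\<le>n. w n k * taylor_coeff f k * z ^ k) = c + (z - \<zeta>) * (\<Sum>i\<le>n. q i * z ^ i)"
    using weighted_sum_linear_factor[where w = w and n = n, OF wz g rep] unfolding q_def b_def by blast
  have rep_h: "\<forall>z\<in>ball 0 1. f z - (\<Sum>k\<le>n. w n k * taylor_coeff f k * z ^ k) = (a - c) + (z - \<zeta>) * h z"
    unfolding c using rep by (simp add: h_def algebra_simps)
  have coeff_h: "taylor_coeff h k = error_coeff w n \<zeta> b k" for k
  proof -
    have "q k = 0" if "n < k"
      using that wz by (simp add: q_def weight_tail_eq_0)
    then show ?thesis
      unfolding h_def taylor_coeff_diff_polynomial[OF g]
      by (simp add: error_coeff_def q_def b_def algebra_simps)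
  qed
  have "in_H2 h"
    unfolding in_H2_def coeff_h
  proof
    show "h holomorphic_on ball 0 1" unfolding h_def by (intro holomorphic_intros g)
    show "summable (\<lambda>k. (norm (error_coeff w n \<zeta> b k))\<^sup>2)"
      by (rule summable_error_coeff[where w = w and n = n, OF wz b])
  qed
  with rep_h show ?thesis
    unfolding local_dirichlet_def by (intro INF_lower2[of h]) (auto simp: H2_normsq_def coeff_h b_def)
qed

lemma local_dirichlet_weighted_sum_le_cmult:
  fixes w :: "nat \<Rightarrow> nat \<Rightarrow> complex"
  assumes wz: "\<And>k. n < k \<Longrightarrow> w n k = 0"
    and wb: "\<And>k. norm (w n k) \<le> M"
    and wlip: "\<And>k. norm (w n k - w n (Suc k)) \<le> L / real n"
    and n: "n \<ge> 1" and z: "norm \<zeta> \<le> 1"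
  shows "local_dirichlet \<zeta> (\<lambda>z. f z - (\<Sum>k\<le>n. w n k * taylor_coeff f k * z ^ k))
           \<le> ennreal (2 * (1 + M)\<^sup>2 + 8 * L\<^sup>2) * local_dirichlet \<zeta> f"
  unfolding local_dirichlet_def[of \<zeta> f]
proof (rule le_cmult_INF_ennreal)
  have "M \<ge> 0"
    using wb[of 0] norm_ge_zero order_trans by blast
  then show "0 < ennreal (2 * (1 + M)\<^sup>2 + 8 * L\<^sup>2)"
    by (simp add: add_pos_nonneg)
  show "ennreal (2 * (1 + M)\<^sup>2 + 8 * L\<^sup>2) < \<infinity>" by simp
next
  fix g assume "g \<in> {g. in_H2 g \<and> (\<exists>a. \<forall>z\<in>ball 0 1. f z = a + (z - \<zeta>) * g z)}"
  then obtain a where g: "in_H2 g" and rep: "\<forall>z\<in>ball 0 1. f z = a + (z - \<zeta>) * g z"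
    by auto
  have "local_dirichlet \<zeta> (\<lambda>z. f z - (\<Sum>k\<le>n. w n k * taylor_coeff f k * z ^ k))
      \<le> ennreal (\<Sum>i. (norm (error_coeff w n \<zeta> (taylor_coeff g) i))\<^sup>2)"
    by (rule local_dirichlet_weighted_sum_le[where w = w and n = n, OF wz g rep])
  also have "\<dots> \<le> ennreal ((2 * (1 + M)\<^sup>2 + 8 * L\<^sup>2) * H2_normsq g)"
    using g unfolding in_H2_def H2_normsq_def
    by (intro ennreal_leI suminf_error_coeff_le[where w = w and n = n, OF wz wb wlip n z]) auto
  also have "\<dots> = ennreal (2 * (1 + M)\<^sup>2 + 8 * L\<^sup>2) * ennreal (H2_normsq g)"
    using g unfolding in_H2_def H2_normsq_def by (simp add: ennreal_mult suminf_nonneg)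
  finally show "local_dirichlet \<zeta> (\<lambda>z. f z - (\<Sum>k\<le>n. w n k * taylor_coeff f k * z ^ k))
      \<le> ennreal (2 * (1 + M)\<^sup>2 + 8 * L\<^sup>2) * ennreal (H2_normsq g)" .
qed

lemma local_dirichlet_weighted_sum_tendsto_zero:
  fixes w :: "nat \<Rightarrow> nat \<Rightarrow> complex"
  assumes wz: "\<And>n k. n < k \<Longrightarrow> w n k = 0"
    and wb: "\<And>n k. norm (w n k) \<le> M"
    and wlip: "\<And>n k. n \<ge> 1 \<Longrightarrow> norm (w n k - w n (Suc k)) \<le> L / real n"
    and wlim: "\<And>k. (\<lambda>n. w n k) \<longlonglongrightarrow> 1"
    and z: "norm \<zeta> \<le> 1" and f: "local_dirichlet \<zeta> f < \<infinity>"
  shows "(\<lambda>n. local_dirichlet \<zeta> (\<lambda>z. f z - (\<Sum>k\<le>n. w n k * taylor_coeff f k * z ^ k))) \<longlonglongrightarrow> 0"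
proof -
  have "{g. in_H2 g \<and> (\<exists>a. \<forall>z\<in>ball 0 1. f z = a + (z - \<zeta>) * g z)} \<noteq> {}"
  proof
    assume "{g. in_H2 g \<and> (\<exists>a. \<forall>z\<in>ball 0 1. f z = a + (z - \<zeta>) * g z)} = {}"
    with f show False
      unfolding local_dirichlet_def by simp
  qed
  then obtain g a where g: "in_H2 g" and rep: "\<forall>z\<in>ball 0 1. f z = a + (z - \<zeta>) * g z"
    by blast
  have "(\<lambda>n. ennreal (\<Sum>i. (norm (error_coeff w n \<zeta> (taylor_coeff g) i))\<^sup>2)) \<longlonglongrightarrow> ennreal 0"
    using g unfolding in_H2_def
    by (intro tendsto_ennrealI suminf_error_coeff_tendsto_zero[where w = w, OF wz wb wlip wlim z]) auto
  then have upper: "(\<lambda>n. ennreal (\<Sum>i. (norm (error_coeff w n \<zeta> (taylor_coeff g) i))\<^sup>2)) \<longlonglongrightarrow> 0"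
    by simp
  have "local_dirichlet \<zeta> (\<lambda>z. f z - (\<Sum>k\<le>n. w n k * taylor_coeff f k * z ^ k))
      \<le> ennreal (\<Sum>i. (norm (error_coeff w n \<zeta> (taylor_coeff g) i))\<^sup>2)" for n
    by (rule local_dirichlet_weighted_sum_le[where w = w and n = n, OF wz[of n] g rep])
  then show ?thesis
    by (intro tendsto_sandwich[OF always_eventually always_eventually tendsto_const upper]) simp_all
qed

lemma dirichlet_mu_weighted_sum_tendsto_zero:
  fixes w :: "nat \<Rightarrow> nat \<Rightarrow> complex" and \<mu> :: "complex measure"
  assumes wz: "\<And>n k. n < k \<Longrightarrow> w n k = 0"
    and wb: "\<And>n k. norm (w n k) \<le> M"
    and wlip: "\<And>n k. n \<ge> 1 \<Longrightarrow> norm (w n k - w n (Suc k)) \<le> L / real n"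
    and wlim: "\<And>k. (\<lambda>n. w n k) \<longlonglongrightarrow> 1"
    and space: "space \<mu> \<subseteq> cball 0 1" and f: "dirichlet_mu \<mu> f < \<infinity>"
  shows "(\<lambda>n. dirichlet_mu \<mu> (\<lambda>z. f z - (\<Sum>k\<le>n. w n k * taylor_coeff f k * z ^ k))) \<longlonglongrightarrow> 0"
proof -
  define p where "p n z = (\<Sum>k\<le>n. w n k * taylor_coeff f k * z ^ k)" for n z
  define C where "C = ennreal (2 * (1 + M)\<^sup>2 + 8 * L\<^sup>2)"
  have C: "0 < C" "C < \<infinity>"
  proof -
    have "M \<ge> 0"
      using wb[of 0 0] norm_ge_zero order_trans by blast
    then show "0 < C"
      unfolding C_def by (simp add: add_pos_nonneg)
  qed (simp add: C_def)
  have "C * dirichlet_mu \<mu> f < \<infinity>"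
    using C f by (simp add: ennreal_mult_less_top)
  then have dom: "(\<integral>\<^sup>+\<zeta>. C * local_dirichlet \<zeta> f \<partial>\<mu>) < \<infinity>"
    using nn_integral_cmult_le[OF C, of \<mu> "\<lambda>\<zeta>. local_dirichlet \<zeta> f"]
    unfolding dirichlet_mu_def by (rule le_less_trans[rotated])
  have "(\<lambda>n. \<integral>\<^sup>+\<zeta>. local_dirichlet \<zeta> (\<lambda>z. f z - p (Suc n) z) \<partial>\<mu>) \<longlonglongrightarrow> 0"
  proof (rule nn_integral_dominated_tendsto_zero[OF dom])
    fix n \<zeta> assume "\<zeta> \<in> space \<mu>"
    then have "norm \<zeta> \<le> 1"
      using space by auto
    then show "local_dirichlet \<zeta> (\<lambda>z. f z - p (Suc n) z) \<le> C * local_dirichlet \<zeta> f"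
      unfolding p_def C_def
      by (intro local_dirichlet_weighted_sum_le_cmult[where w = w and n = "Suc n"] wz wb wlip) auto
  next
    fix \<zeta> assume "\<zeta> \<in> space \<mu>" and "C * local_dirichlet \<zeta> f < \<infinity>"
    then have "norm \<zeta> \<le> 1" and "local_dirichlet \<zeta> f < \<infinity>"
      using space C by (auto simp: ennreal_mult_less_top)
    from local_dirichlet_weighted_sum_tendsto_zero[where w = w, OF wz wb wlip wlim this]
    show "(\<lambda>n. local_dirichlet \<zeta> (\<lambda>z. f z - p (Suc n) z)) \<longlonglongrightarrow> 0"
      unfolding p_def by (rule LIMSEQ_Suc)
  qed
  then show ?thesis
    unfolding dirichlet_mu_def p_def by (rule LIMSEQ_imp_Suc)
qed

theorem theorem1:
  fixes w :: "nat \<Rightarrow> nat \<Rightarrow> complex" and L M :: real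
    and f :: "complex \<Rightarrow> complex" and \<mu> :: "complex measure"
  assumes w_zero: "\<And>n k. k > n \<Longrightarrow> w n k = 0"
    and w_lim: "\<And>k. (\<lambda>n. w n k) \<longlonglongrightarrow> 1"
    and w_bdd: "\<And>n k. norm (w n k) \<le> M"
    and w_lip: "\<And>n k. n \<ge> 1 \<Longrightarrow> norm (w n k - w n (Suc k)) \<le> L / real n"
    and f_hol: "f holomorphic_on ball 0 1"
    and mu_sets: "sets \<mu> = sets (restrict_space borel (cball (0::complex) 1))"
    and mu_fin: "finite_measure \<mu>"
    and f_in: "dirichlet_mu \<mu> f < \<infinity>"
  shows "(\<lambda>n. Dmu_normsq \<mu>
            (\<lambda>z. f z - (\<Sum>k\<le>n. w n k * taylor_coeff f k * z ^ k))) \<longlonglongrightarrow> 0"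
proof -
  have space: "space \<mu> \<subseteq> cball 0 1"
    using sets_eq_imp_space_eq[OF mu_sets] by (simp add: space_restrict_space)
  have "(\<Sum>k\<le>n. w n k * taylor_coeff f k * 0 ^ k) = w n 0 * f 0" for n
    by (simp add: taylor_coeff_def zero_power sum.atMost_shift)
  moreover have "(\<lambda>n. (norm ((1 - w n 0) * f 0))\<^sup>2) \<longlonglongrightarrow> (norm ((1 - 1) * f 0))\<^sup>2"
    by (intro tendsto_intros w_lim)
  ultimately have "(\<lambda>n. ennreal ((norm (f 0 - (\<Sum>k\<le>n. w n k * taylor_coeff f k * 0 ^ k)))\<^sup>2)) \<longlonglongrightarrow> ennreal 0"
    by (intro tendsto_ennrealI) (simp add: algebra_simps)
  moreover note dirichlet_mu_weighted_sum_tendsto_zero[where w = w, OF w_zero w_bdd w_lip w_lim space f_in]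
  ultimately have "(\<lambda>n. Dmu_normsq \<mu> (\<lambda>z. f z - (\<Sum>k\<le>n. w n k * taylor_coeff f k * z ^ k))) \<longlonglongrightarrow> ennreal 0 + 0"
    unfolding Dmu_normsq_def by (rule tendsto_add)
  then show ?thesis
    by simp
qed

end
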